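(* Let $k\ge 1$, let $\mathcal{F} \subset \binom{[n]}{k}$ with $|\mathcal{F}|=m$, let $0 < \epsilon \leq \frac{1}{2}$ and suppose $n>2 \log \frac{1}{\epsilon}+k$. Suppose that $\beta(\mathcal{F}) \leq (1-\theta)m(n-k)$ for some $0 < \theta \leq 1$. Then there exists a subfamily $S \subset \mathcal{F}$ such that $$|\Gamma(S)| \geq (1-\epsilon) \theta m \quad\text{and}\quad |S| < \Big(20\log\tfrac{1}{\epsilon}\Big) \cdot \frac{m}{n-k} +2\log\frac{1}{\epsilon \theta}.$$
   Context: $\log$ is the natural logarithm. For $\sigma\in\mathcal{F}$, $\beta_{\mathcal{F}}(\sigma)=|\{\tau\in\binom{[n]}{k+1}: \binom{\tau}{k}\cap\mathcal{F}=\{\sigma\}\}|$ (the number of $(k+1)$-sets containing $\sigma$ and no other member of $\mathcal{F}$), and $\beta(\mathcal{F})=\sum_{\sigma\in\mathcal{F}}\beta_{\mathcal{F}}(\sigma)$. For $S\subset\mathcal{F}$, $\Gamma(S)=\{\eta\in\mathcal{F}: |\eta\cap\sigma|=k-1 \text{ for some } \sigma\in S\}$. *)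

theory Defs
  imports Complex_Main
begin

definition ksubsets :: "nat set \<Rightarrow> nat \<Rightarrow> nat set set" where
  "ksubsets A k = {B. B \<subseteq> A \<and> card B = k}"

definition beta_at :: "nat \<Rightarrow> nat \<Rightarrow> nat set set \<Rightarrow> nat set \<Rightarrow> nat" where
  "beta_at n k F \<sigma> = card {\<tau> \<in> ksubsets {1..n} (k+1). ksubsets \<tau> k \<inter> F = {\<sigma>}}"

definition beta :: "nat \<Rightarrow> nat \<Rightarrow> nat set set \<Rightarrow> nat" where
  "beta n k F = (\<Sum>\<sigma>\<in>F. beta_at n k F \<sigma>)"

definition Gamma :: "nat \<Rightarrow> nat set set \<Rightarrow> nat set set \<Rightarrow> nat set set" where
  "Gamma k F S = {\<eta> \<in> F. \<exists>\<sigma>\<in>S. card (\<eta> \<inter> \<sigma>) = k - 1}"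

end

(* Choose t = ceil (ln (1/eps) m / (n - k)) members of F uniformly at random, with repetition.
   Each of the n - k sets insert x sigma (x not in sigma) that is not counted by beta_F(sigma)
   contains a second member of F, which meets sigma in k - 1 points. So sigma has at least
   (n - k) x_sigma neighbours, where x_sigma = 1 - beta_F(sigma) / (n - k) is its nonprivate
   fraction, and sigma stays outside Gamma(S) with probability at most
   (1 - (n - k) x_sigma / m)^t <= eps^x_sigma <= 1 - (1 - eps) x_sigma,
   the last step by convexity of x |-> eps^x. Hence some choice of S has |S| <= t and
   |Gamma(S)| >= (1 - eps) sum x_sigma >= (1 - eps) theta m. *)
theory Submission imports Defs "HOL-Analysis.Convex" "HOL-Library.FuncSet" begin

definition neighbours :: "nat \<Rightarrow> nat set set \<Rightarrow> nat set \<Rightarrow> nat set set" where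
  "neighbours k F \<sigma> = {\<eta> \<in> F. card (\<sigma> \<inter> \<eta>) = k - 1}"

lemma Gamma_eq_hit_neighbours:
  assumes "S \<subseteq> F"
  shows "Gamma k F S = {\<eta> \<in> F. neighbours k F \<eta> \<inter> S \<noteq> {}}"
  using assms unfolding Gamma_def neighbours_def by blast

lemma ksubsets_insert_neqD:
  assumes "\<eta> \<in> ksubsets (insert x \<sigma>) k" "\<eta> \<noteq> \<sigma>" "card \<sigma> = k" "finite \<sigma>" "x \<notin> \<sigma>"
  shows "\<eta> - \<sigma> = {x}" "card (\<sigma> \<inter> \<eta>) = k - 1"
proof -
  have sub: "\<eta> \<subseteq> insert x \<sigma>" and card_\<eta>: "card \<eta> = k"
    using assms(1) by (auto simp: ksubsets_def)
  have "x \<in> \<eta>"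
  proof (rule ccontr)
    assume "x \<notin> \<eta>"
    then have "\<eta> \<subseteq> \<sigma>" using sub by auto
    then show False using assms(2-4) card_\<eta> card_subset_eq by metis
  qed
  then show "\<eta> - \<sigma> = {x}" using sub assms(5) by auto
  have "\<sigma> \<inter> \<eta> = \<eta> - {x}" using sub assms(5) by auto
  then show "card (\<sigma> \<inter> \<eta>) = k - 1"
    using \<open>x \<in> \<eta>\<close> card_\<eta> finite_subset[OF sub] assms(4) by simp
qed

lemma n_minus_k_le_beta_at_add_card_neighbours:
  assumes F: "F \<subseteq> ksubsets {1..n} k" and "\<sigma> \<in> F"
  shows "n - k \<le> beta_at n k F \<sigma> + card (neighbours k F \<sigma>)"
proof -
  define B where "B = {\<tau> \<in> ksubsets {1..n} (k+1). ksubsets \<tau> k \<inter> F = {\<sigma>}}"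
  let ?pt = "\<lambda>\<tau>. the_elem (\<tau> - \<sigma>)"
  have \<sigma>: "\<sigma> \<subseteq> {1..n}" "card \<sigma> = k" "finite \<sigma>"
    using assms by (auto simp: ksubsets_def intro: finite_subset)
  have finite_F: "finite F" using F by (rule finite_subset) (auto simp: ksubsets_def)
  have finite_B: "finite B" unfolding B_def ksubsets_def
    by (rule finite_subset[of _ "Pow {1..n}"]) auto
  have "{1..n} - \<sigma> \<subseteq> ?pt ` B \<union> ?pt ` neighbours k F \<sigma>"
  proof
    fix x assume x: "x \<in> {1..n} - \<sigma>"
    have "insert x \<sigma> \<in> ksubsets {1..n} (k+1)" using x \<sigma> by (auto simp: ksubsets_def)
    moreover have "\<sigma> \<in> ksubsets (insert x \<sigma>) k \<inter> F" using assms(2) \<sigma> by (auto simp: ksubsets_def)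
    ultimately consider "insert x \<sigma> \<in> B"
      | \<eta> where "\<eta> \<in> ksubsets (insert x \<sigma>) k" "\<eta> \<in> F" "\<eta> \<noteq> \<sigma>"
      unfolding B_def by blast
    then show "x \<in> ?pt ` B \<union> ?pt ` neighbours k F \<sigma>"
    proof cases
      case 1
      have "?pt (insert x \<sigma>) = x" using x by (simp add: insert_Diff_if)
      then show ?thesis using 1 by (metis UnI1 image_eqI)
    next
      case 2
      with ksubsets_insert_neqD[OF 2(1,3) \<sigma>(2,3)] x
      have "\<eta> \<in> neighbours k F \<sigma>" "?pt \<eta> = x" by (auto simp: neighbours_def)
      then show ?thesis by (metis UnI2 image_eqI)
    qed
  qed
  then have "card ({1..n} - \<sigma>) \<le> card (?pt ` B \<union> ?pt ` neighbours k F \<sigma>)"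
    using finite_B finite_F by (intro card_mono) (auto simp: neighbours_def)
  also have "\<dots> \<le> card (?pt ` B) + card (?pt ` neighbours k F \<sigma>)"
    by (rule card_Un_le)
  also have "\<dots> \<le> card B + card (neighbours k F \<sigma>)"
    by (intro add_mono card_image_le) (use finite_B finite_F in \<open>auto simp: neighbours_def\<close>)
  finally show ?thesis using \<sigma> by (simp add: card_Diff_subset beta_at_def B_def)
qed

definition nonprivate_fraction :: "nat \<Rightarrow> nat \<Rightarrow> nat set set \<Rightarrow> nat set \<Rightarrow> real" where
  "nonprivate_fraction n k F \<sigma> = max 0 (1 - beta_at n k F \<sigma> / real (n - k))"

lemma nonprivate_fraction_bounds:
  assumes "k < n"
  shows "0 \<le> nonprivate_fraction n k F \<sigma> \<and> nonprivate_fraction n k F \<sigma> \<le> 1"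
  using assms by (simp add: nonprivate_fraction_def)

lemma nonprivate_fraction_le_card_neighbours:
  assumes "F \<subseteq> ksubsets {1..n} k" "\<sigma> \<in> F" "k < n"
  shows "real (n - k) * nonprivate_fraction n k F \<sigma> \<le> card (neighbours k F \<sigma>)"
  using n_minus_k_le_beta_at_add_card_neighbours[OF assms(1,2)] assms(3)
  by (simp add: nonprivate_fraction_def max_mult_distrib_left right_diff_distrib)

lemma sum_nonprivate_fraction_ge:
  fixes \<theta> :: real
  assumes "k < n" and beta: "real (beta n k F) \<le> (1 - \<theta>) * card F * real (n - k)"
  shows "\<theta> * card F \<le> (\<Sum>\<sigma>\<in>F. nonprivate_fraction n k F \<sigma>)"
proof -
  have "real (beta n k F) / real (n - k) \<le> (1 - \<theta>) * card F"
    using beta assms(1) by (simp add: pos_divide_le_eq)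
  then have "\<theta> * card F \<le> card F - real (beta n k F) / real (n - k)" by (simp add: algebra_simps)
  also have "\<dots> = (\<Sum>\<sigma>\<in>F. 1 - beta_at n k F \<sigma> / real (n - k))"
    by (simp add: sum_subtractf beta_def sum_divide_distrib)
  also have "\<dots> \<le> (\<Sum>\<sigma>\<in>F. nonprivate_fraction n k F \<sigma>)"
    by (intro sum_mono) (simp add: nonprivate_fraction_def)
  finally show ?thesis .
qed

lemma one_le_two_ln_inverse:
  fixes a :: real
  assumes "0 < a" "a \<le> 1/2"
  shows "1 \<le> 2 * ln (1 / a)"
  using ln_le_minus_one[of a] assms by (simp add: ln_div)

lemma powr_le_chord:
  fixes e x :: real
  assumes "0 < e" "0 \<le> x" "x \<le> 1"
  shows "e powr x \<le> 1 - (1 - e) * x"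
proof -
  have "exp ((1 - x) *\<^sub>R 0 + x *\<^sub>R ln e) \<le> (1 - x) * exp 0 + x * exp (ln e)"
    using assms by (intro convex_onD[OF exp_convex]) auto
  then show ?thesis using assms by (simp add: powr_def algebra_simps)
qed

lemma one_minus_divide_power_le_powr:
  fixes d m D x \<epsilon> :: real and t :: nat
  assumes "0 < m" "d \<le> m" "0 < D" "0 \<le> x" "D * x \<le> d" "0 < \<epsilon>" "\<epsilon> \<le> 1"
    and t: "ln (1/\<epsilon>) * m / D \<le> t"
  shows "(1 - d / m) ^ t \<le> \<epsilon> powr x"
proof -
  have ln_nonneg: "0 \<le> ln (1/\<epsilon>)" using assms(6,7) by simp
  have "0 \<le> D * x" using assms(3,4) by simp
  have "(1 - d / m) ^ t \<le> exp (- (d / m)) ^ t"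
  proof (rule power_mono)
    show "1 - d / m \<le> exp (- (d / m))" using exp_ge_add_one_self[of "- (d / m)"] by simp
    show "0 \<le> 1 - d / m" using assms(1,2) by simp
  qed
  also have "\<dots> = exp (- (t * d / m))" by (simp add: exp_of_nat_mult[symmetric])
  also have "\<dots> \<le> exp (- (ln (1/\<epsilon>) * x))"
  proof -
    have "ln (1/\<epsilon>) * x = (ln (1/\<epsilon>) * m / D) * (D * x) / m" using assms(1,3) by simp
    also have "\<dots> \<le> t * d / m"
      using t assms(1,5) ln_nonneg \<open>0 \<le> D * x\<close>
      by (intro divide_right_mono mult_mono) simp_all
    finally show ?thesis by simp
  qed
  also have "\<dots> = \<epsilon> powr x" using assms(6) by (simp add: powr_def ln_div)
  finally show ?thesis .
qed

lemma le_nat_ceiling_imp_less_plus_one: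
  fixes y :: real
  assumes "a \<le> nat \<lceil>y\<rceil>" "0 \<le> y"
  shows "real a < y + 1"
proof -
  have "real a \<le> real (nat \<lceil>y\<rceil>)" using assms(1) by simp
  also have "\<dots> < y + 1" using assms(2) ceiling_correct[of y] by simp
  finally show ?thesis .
qed

lemma ex_card_mult_le_sum:
  fixes g :: "'a \<Rightarrow> 'b::linordered_semidom"
  assumes "finite A" "A \<noteq> {}"
  shows "\<exists>a\<in>A. of_nat (card A) * g a \<le> sum g A"
proof (rule ccontr)
  assume "\<not> ?thesis"
  then have "(\<Sum>a\<in>A. sum g A) < (\<Sum>a\<in>A. of_nat (card A) * g a)"
    using assms by (intro sum_strict_mono) auto
  then show False by (simp add: sum_distrib_left)
qed

lemma sum_card_avoiding_PiE:
  assumes "finite F" "finite X"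
  shows "(\<Sum>f \<in> {..<t} \<rightarrow>\<^sub>E F. card {x \<in> X. \<forall>i<t. f i \<notin> N x}) = (\<Sum>x\<in>X. card (F - N x) ^ t)"
proof -
  have "(\<Sum>f \<in> {..<t} \<rightarrow>\<^sub>E F. card {x \<in> X. \<forall>i<t. f i \<notin> N x})
      = (\<Sum>f \<in> {..<t} \<rightarrow>\<^sub>E F. \<Sum>x\<in>X. if \<forall>i<t. f i \<notin> N x then 1 else 0)"
    using assms by (simp add: sum.If_cases Int_def)
  also have "\<dots> = (\<Sum>x\<in>X. \<Sum>f \<in> {..<t} \<rightarrow>\<^sub>E F. if \<forall>i<t. f i \<notin> N x then 1 else 0)"
    by (rule sum.swap)
  also have "\<dots> = (\<Sum>x\<in>X. card ({..<t} \<rightarrow>\<^sub>E F - N x))"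
  proof (rule sum.cong[OF refl])
    fix x
    have "{f \<in> {..<t} \<rightarrow>\<^sub>E F. \<forall>i<t. f i \<notin> N x} = {..<t} \<rightarrow>\<^sub>E F - N x"
      by (auto simp: PiE_def Pi_def)
    then show "(\<Sum>f \<in> {..<t} \<rightarrow>\<^sub>E F. if \<forall>i<t. f i \<notin> N x then 1 else 0) = card ({..<t} \<rightarrow>\<^sub>E F - N x)"
      using assms(1) by (simp add: sum.If_cases Int_def finite_PiE)
  qed
  also have "\<dots> = (\<Sum>x\<in>X. card (F - N x) ^ t)"
    using assms(1) by (simp add: card_funcsetE)
  finally show ?thesis .
qed

lemma ex_PiE_card_avoiding_le:
  fixes N :: "'a \<Rightarrow> 'a set"
  assumes "finite F" "F \<noteq> {}" and N: "\<And>\<sigma>. \<sigma> \<in> F \<Longrightarrow> N \<sigma> \<subseteq> F"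
  shows "\<exists>f \<in> {..<t} \<rightarrow>\<^sub>E F.
    real (card {\<sigma> \<in> F. \<forall>i<t. f i \<notin> N \<sigma>}) \<le> (\<Sum>\<sigma>\<in>F. (1 - card (N \<sigma>) / card F) ^ t)"
proof -
  define m where "m = card F"
  have "0 < m" using assms(1,2) by (simp add: m_def card_gt_0_iff)
  obtain f where f: "f \<in> {..<t} \<rightarrow>\<^sub>E F"
    and f_avoids: "m ^ t * card {\<sigma> \<in> F. \<forall>i<t. f i \<notin> N \<sigma>} \<le> (\<Sum>\<sigma>\<in>F. card (F - N \<sigma>) ^ t)"
    using ex_card_mult_le_sum[of "{..<t} \<rightarrow>\<^sub>E F" "\<lambda>f. card {\<sigma> \<in> F. \<forall>i<t. f i \<notin> N \<sigma>}"]
      sum_card_avoiding_PiE[OF \<open>finite F\<close> \<open>finite F\<close>, of t N] assms(1,2)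
    by (auto simp: m_def card_funcsetE finite_PiE PiE_eq_empty_iff)
  have "real (card (F - N \<sigma>)) ^ t = real m ^ t * (1 - card (N \<sigma>) / m) ^ t" if "\<sigma> \<in> F" for \<sigma>
  proof -
    have "card (F - N \<sigma>) = m - card (N \<sigma>)" "card (N \<sigma>) \<le> m"
      using N[OF that] \<open>finite F\<close> by (simp_all add: m_def card_Diff_subset finite_subset card_mono)
    then have "real (card (F - N \<sigma>)) = real m * (1 - card (N \<sigma>) / m)"
      using \<open>0 < m\<close> by (simp add: of_nat_diff field_simps)
    then show ?thesis by (simp add: power_mult_distrib)
  qed
  then have "(\<Sum>\<sigma>\<in>F. real (card (F - N \<sigma>)) ^ t) = real m ^ t * (\<Sum>\<sigma>\<in>F. (1 - card (N \<sigma>) / m) ^ t)"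
    by (simp add: sum_distrib_left)
  moreover have "real m ^ t * card {\<sigma> \<in> F. \<forall>i<t. f i \<notin> N \<sigma>} \<le> (\<Sum>\<sigma>\<in>F. real (card (F - N \<sigma>)) ^ t)"
    using f_avoids unfolding of_nat_le_iff[where 'a=real, symmetric] by simp
  ultimately show ?thesis using f \<open>0 < m\<close> by (auto simp: m_def)
qed

lemma ex_small_subset_hitting_neighbours:
  fixes N :: "'a \<Rightarrow> 'a set" and x :: "'a \<Rightarrow> real" and D \<epsilon> :: real and t :: nat
  assumes "finite F" and N: "\<And>\<sigma>. \<sigma> \<in> F \<Longrightarrow> N \<sigma> \<subseteq> F"
    and x: "\<And>\<sigma>. \<sigma> \<in> F \<Longrightarrow> 0 \<le> x \<sigma> \<and> x \<sigma> \<le> 1"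
    and degree: "\<And>\<sigma>. \<sigma> \<in> F \<Longrightarrow> D * x \<sigma> \<le> card (N \<sigma>)"
    and "0 < D" "0 < \<epsilon>" "\<epsilon> \<le> 1" and t: "ln (1/\<epsilon>) * card F / D \<le> t"
  shows "\<exists>S \<subseteq> F. card S \<le> t \<and> (1 - \<epsilon>) * (\<Sum>\<sigma>\<in>F. x \<sigma>) \<le> card {\<sigma> \<in> F. N \<sigma> \<inter> S \<noteq> {}}"
proof (cases "F = {}")
  case True
  then show ?thesis by auto
next
  case False
  define U where "U f = {\<sigma> \<in> F. \<forall>i<t. f i \<notin> N \<sigma>}" for f :: "nat \<Rightarrow> 'a"
  obtain f where f: "f \<in> {..<t} \<rightarrow>\<^sub>E F"
    and f_avoids: "real (card (U f)) \<le> (\<Sum>\<sigma>\<in>F. (1 - card (N \<sigma>) / card F) ^ t)"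
    using ex_PiE_card_avoiding_le[where N = N and t = t, OF \<open>finite F\<close> False N] unfolding U_def by blast
  define S where "S = f ` {..<t}"
  have "S \<subseteq> F" using f by (auto simp: S_def)
  have hit: "{\<sigma> \<in> F. N \<sigma> \<inter> S \<noteq> {}} = F - U f" by (auto simp: S_def U_def)
  have "0 < card F" using False \<open>finite F\<close> by (simp add: card_gt_0_iff)
  note f_avoids
  also have "(\<Sum>\<sigma>\<in>F. (1 - card (N \<sigma>) / card F) ^ t) \<le> (\<Sum>\<sigma>\<in>F. \<epsilon> powr x \<sigma>)"
  proof (rule sum_mono)
    fix \<sigma> assume "\<sigma> \<in> F"
    show "(1 - card (N \<sigma>) / card F) ^ t \<le> \<epsilon> powr x \<sigma>"
    proof (rule one_minus_divide_power_le_powr)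
      show "real (card (N \<sigma>)) \<le> card F" using N[OF \<open>\<sigma> \<in> F\<close>] \<open>finite F\<close> by (simp add: card_mono)
      show "D * x \<sigma> \<le> card (N \<sigma>)" "0 \<le> x \<sigma>" using degree x \<open>\<sigma> \<in> F\<close> by auto
    qed (use \<open>0 < card F\<close> assms(5-7) t in auto)
  qed
  also have "\<dots> \<le> (\<Sum>\<sigma>\<in>F. 1 - (1 - \<epsilon>) * x \<sigma>)"
    using x assms(6) by (intro sum_mono powr_le_chord) auto
  also have "\<dots> = card F - (1 - \<epsilon>) * (\<Sum>\<sigma>\<in>F. x \<sigma>)"
    by (simp add: sum_subtractf sum_distrib_left)
  finally have "(1 - \<epsilon>) * (\<Sum>\<sigma>\<in>F. x \<sigma>) \<le> real (card (F - U f))"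
    using \<open>finite F\<close> by (simp add: card_Diff_subset U_def of_nat_diff card_mono)
  moreover have "card S \<le> t" using card_image_le[of "{..<t}" f] by (simp add: S_def)
  ultimately show ?thesis using \<open>S \<subseteq> F\<close> hit by auto
qed

theorem claim3p2:
  fixes n k m :: nat and F :: "nat set set" and \<epsilon> \<theta> :: real
  assumes "k \<ge> 1"
    and "F \<subseteq> ksubsets {1..n} k"
    and "card F = m"
    and "0 < \<epsilon>" and "\<epsilon> \<le> 1/2"
    and "real n > 2 * ln (1/\<epsilon>) + real k"
    and "0 < \<theta>" and "\<theta> \<le> 1"
    and "real (beta n k F) \<le> (1 - \<theta>) * real m * real (n - k)"
  shows "\<exists>S \<subseteq> F. real (card (Gamma k F S)) \<ge> (1 - \<epsilon>) * \<theta> * real m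
            \<and> real (card S) < (20 * ln (1/\<epsilon>)) * real m / real (n - k) + 2 * ln (1 / (\<epsilon> * \<theta>))"
proof -
  define y where "y = ln (1/\<epsilon>) * m / real (n - k)"
  have "0 < ln (1/\<epsilon>)" using assms(4,5) by simp
  then have "k < n" using assms(6) by simp
  have "finite F" using assms(2) by (rule finite_subset) (auto simp: ksubsets_def)
  obtain S where "S \<subseteq> F" "card S \<le> nat \<lceil>y\<rceil>"
    and hit: "(1 - \<epsilon>) * (\<Sum>\<sigma>\<in>F. nonprivate_fraction n k F \<sigma>)
      \<le> card {\<sigma> \<in> F. neighbours k F \<sigma> \<inter> S \<noteq> {}}"
    using ex_small_subset_hitting_neighbours[of F "neighbours k F" "nonprivate_fraction n k F"
        "real (n - k)" \<epsilon> "nat \<lceil>y\<rceil>"] \<open>finite F\<close> \<open>k < n\<close> assms(2-5)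
      nonprivate_fraction_bounds nonprivate_fraction_le_card_neighbours real_nat_ceiling_ge[of y]
    by (auto simp: neighbours_def y_def)
  have "\<theta> * m \<le> (\<Sum>\<sigma>\<in>F. nonprivate_fraction n k F \<sigma>)"
    using sum_nonprivate_fraction_ge[OF \<open>k < n\<close>, of F \<theta>] assms(3,9) by blast
  then have "(1 - \<epsilon>) * (\<theta> * m) \<le> (1 - \<epsilon>) * (\<Sum>\<sigma>\<in>F. nonprivate_fraction n k F \<sigma>)"
    using assms(5) by (intro mult_left_mono) auto
  also have "\<dots> \<le> card (Gamma k F S)"
    using hit Gamma_eq_hit_neighbours[OF \<open>S \<subseteq> F\<close>] by simp
  finally have "(1 - \<epsilon>) * (\<theta> * m) \<le> card (Gamma k F S)" .
  moreover have "real (card S) < y + 1"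
    using \<open>card S \<le> nat \<lceil>y\<rceil>\<close> \<open>0 < ln (1/\<epsilon>)\<close>
    by (intro le_nat_ceiling_imp_less_plus_one) (auto simp: y_def)
  moreover have "y \<le> 20 * ln (1/\<epsilon>) * m / real (n - k)"
    using \<open>0 < ln (1/\<epsilon>)\<close> by (simp add: y_def divide_right_mono)
  moreover have "1 \<le> 2 * ln (1 / (\<epsilon> * \<theta>))"
    using assms(4,5,7,8) mult_mono[of \<epsilon> "1/2" \<theta> 1] by (intro one_le_two_ln_inverse) auto
  ultimately show ?thesis using \<open>S \<subseteq> F\<close> by (intro exI[of _ S]) (auto simp: algebra_simps)
qed

end
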